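(* Let $n\ge q\ge1$ and write $n=(2^q-1)v+w$ with $v=\lfloor n/(2^q-1)\rfloor$ and $w\in\{0,1,\dots,2^q-2\}$. For any blocked $2^n$ factorial in blocks of size $2^q$ whose generator matrix $X$ has all columns in $\mathcal{X}_q$ (so that all main effects are estimable), the number of estimable two-factor interactions is at most $$\phi_{\max}=\binom{n}{2}-vw-(2^q-1)\binom{v}{2}.$$
   Context: A blocked $2^n$ factorial in blocks of size $2^q$ is specified by a $q\times n$ generator matrix $X$ over $\mathrm{GF}(2)$ of rank $q$: the principal block is the row space of $X$ and the other blocks are its cosets in $\mathrm{GF}(2)^n$. An effect of a set $S$ of factors, with contrast $(-1)^{\sum_{j\in S}x_j}$, is estimable iff its contrast sums to zero over every block; equivalently the two-factor interaction $F_jF_k$ is estimable iff columns $j$ and $k$ of $X$ differ. $\mathcal{X}_q$ is the set of the $2^q-1$ nonzero $q\times1$ vectors over $\mathrm{GF}(2)$. *)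

theory Defs
  imports Main
begin

text \<open>A q x n matrix over GF(2) is represented as X :: nat \<Rightarrow> nat \<Rightarrow> bool,
  entry (i,j) = X i j (True = 1), only indices i < q, j < n being relevant.\<close>

text \<open>Rank q over GF(2): the q rows are linearly independent, i.e. no nonempty
  set of rows sums (mod 2) to the zero vector.\<close>
definition gf2_full_row_rank :: "nat \<Rightarrow> nat \<Rightarrow> (nat \<Rightarrow> nat \<Rightarrow> bool) \<Rightarrow> bool" where
  "gf2_full_row_rank q n X \<longleftrightarrow>
     (\<forall>S. S \<subseteq> {..<q} \<longrightarrow> S \<noteq> {} \<longrightarrow> (\<exists>j<n. odd (card {i\<in>S. X i j})))"

definition col_nonzero :: "nat \<Rightarrow> (nat \<Rightarrow> nat \<Rightarrow> bool) \<Rightarrow> nat \<Rightarrow> bool" where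
  "col_nonzero q X j \<longleftrightarrow> (\<exists>i<q. X i j)"

text \<open>Columns j and k differ (i.e. interaction F_j F_k is estimable).\<close>
definition cols_differ :: "nat \<Rightarrow> (nat \<Rightarrow> nat \<Rightarrow> bool) \<Rightarrow> nat \<Rightarrow> nat \<Rightarrow> bool" where
  "cols_differ q X j k \<longleftrightarrow> (\<exists>i<q. X i j \<noteq> X i k)"

definition num_est_2fi :: "nat \<Rightarrow> nat \<Rightarrow> (nat \<Rightarrow> nat \<Rightarrow> bool) \<Rightarrow> nat" where
  "num_est_2fi q n X = card {(j,k). j < k \<and> k < n \<and> cols_differ q X j k}"

end

theory Submission
  imports Defs "HOL-Library.Ramsey"
begin

(* F_j F_k is inestimable exactly when columns j and k coincide, so grouping the n factors
   by their column partitions them into at most 2^q - 1 classes, and the inestimable pairs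
   are the pairs inside a class.  A class of size x contributes C(x,2); since x \<mapsto> C(x,2)
   lies above its tangent line C(v,2) + v (x - v), summing over the classes shows that the
   total is at least that of a balanced partition into classes of sizes v and v + 1. *)

lemma two_times_choose_two: "2 * int (x choose 2) = int x * (int x - 1)"
proof -
  have "even (x * (x - 1))"
    by (cases "even x") auto
  then have "2 * (x choose 2) = x * (x - 1)"
    by (simp add: choose_two)
  then have "int (2 * (x choose 2)) = int (x * (x - 1))"
    by (rule arg_cong)
  then show ?thesis
    by (cases x) (simp_all add: algebra_simps)
qed

lemma choose_two_ge_tangent: "int (v choose 2) + int v * (int x - int v) \<le> int (x choose 2)"
proof -
  have "0 \<le> (int x - int v) * (int x - int v - 1)"
    by (cases "x \<le> v") (auto intro: mult_nonpos_nonpos)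
  then show ?thesis
    using two_times_choose_two[of x] two_times_choose_two[of v] by (simp add: algebra_simps)
qed

lemma card_less_pairs:
  fixes A :: "'a::linorder set"
  assumes "finite A"
  shows "card {(j, k). j \<in> A \<and> k \<in> A \<and> j < k} = card A choose 2"
proof -
  let ?P = "{(j, k). j \<in> A \<and> k \<in> A \<and> j < k}"
  have "inj_on (\<lambda>(j, k). {j, k}) ?P"
    by (auto simp: inj_on_def doubleton_eq_iff)
  then have "card ?P = card ((\<lambda>(j, k). {j, k}) ` ?P)"
    by (simp add: card_image)
  also have "(\<lambda>(j, k). {j, k}) ` ?P = [A]\<^bsup>2\<^esup>"
    by (auto simp: ordered_nsets_2_eq)
  finally show ?thesis
    by simp
qed

lemma card_less_pairs_same_value:
  fixes A :: "'a::linorder set" and f :: "'a \<Rightarrow> 'b"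
  assumes "finite A" and "finite C" and "f ` A \<subseteq> C"
  shows "card {(j, k). j \<in> A \<and> k \<in> A \<and> j < k \<and> f j = f k}
           = (\<Sum>c\<in>C. card {j \<in> A. f j = c} choose 2)"
proof -
  let ?F = "\<lambda>c. {j \<in> A. f j = c}"
  let ?P = "\<lambda>c. {(j, k). j \<in> ?F c \<and> k \<in> ?F c \<and> j < k}"
  have "{(j, k). j \<in> A \<and> k \<in> A \<and> j < k \<and> f j = f k} = (\<Union>c\<in>C. ?P c)"
    using assms(3) by auto
  also have "card \<dots> = (\<Sum>c\<in>C. card (?P c))"
  proof (rule card_UN_disjoint)
    show "\<forall>c\<in>C. finite (?P c)"
      using assms(1) by (auto intro: finite_subset[of _ "A \<times> A"])
  qed (use assms(2) in auto)
  also have "\<dots> = (\<Sum>c\<in>C. card (?F c) choose 2)"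
    using assms(1) by (intro sum.cong refl card_less_pairs) simp
  finally show ?thesis .
qed

lemma sum_card_fibres:
  assumes "finite A" and "finite C" and "f ` A \<subseteq> C"
  shows "(\<Sum>c\<in>C. card {j \<in> A. f j = c}) = card A"
  using sum.group[OF assms, of "\<lambda>_. 1::nat"] by (simp only: card_eq_sum)

lemma card_less_pairs_same_value_ge:
  fixes A :: "'a::linorder set" and f :: "'a \<Rightarrow> 'b"
  assumes "finite A" and "finite C" and "f ` A \<subseteq> C"
  defines "v \<equiv> card A div card C" and "w \<equiv> card A mod card C"
  shows "card C * (v choose 2) + v * w \<le> card {(j, k). j \<in> A \<and> k \<in> A \<and> j < k \<and> f j = f k}"
proof -
  let ?x = "\<lambda>c. card {j \<in> A. f j = c}"
  have "card A = card C * v + w"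
    unfolding v_def w_def by simp
  then have "int (card C * (v choose 2) + v * w)
      = int (card C) * int (v choose 2) + int v * ((\<Sum>c\<in>C. int (?x c)) - int (card C) * int v)"
    using sum_card_fibres[OF assms(1-3)] by (simp flip: of_nat_sum)
  also have "\<dots> = (\<Sum>c\<in>C. int (v choose 2) + int v * (int (?x c) - int v))"
    by (simp add: sum.distrib sum_subtractf sum_distrib_left right_diff_distrib)
  also have "\<dots> \<le> (\<Sum>c\<in>C. int (?x c choose 2))"
    by (intro sum_mono choose_two_ge_tangent)
  also have "\<dots> = int (card {(j, k). j \<in> A \<and> k \<in> A \<and> j < k \<and> f j = f k})"
    by (simp add: card_less_pairs_same_value[OF assms(1-3)])
  finally show ?thesis
    by linarith
qed

lemma card_less_pairs_distinct_values_le: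
  fixes A :: "'a::linorder set" and f :: "'a \<Rightarrow> 'b"
  assumes "finite A" and "finite C" and "f ` A \<subseteq> C"
  defines "v \<equiv> card A div card C" and "w \<equiv> card A mod card C"
  shows "card {(j, k). j \<in> A \<and> k \<in> A \<and> j < k \<and> f j \<noteq> f k} + card C * (v choose 2) + v * w
           \<le> card A choose 2"
proof -
  let ?D = "{(j, k). j \<in> A \<and> k \<in> A \<and> j < k \<and> f j \<noteq> f k}"
  let ?E = "{(j, k). j \<in> A \<and> k \<in> A \<and> j < k \<and> f j = f k}"
  have fin: "finite {(j, k). j \<in> A \<and> k \<in> A \<and> j < k}"
    using assms(1) by (auto intro: finite_subset[of _ "A \<times> A"])
  have "card ?D + card ?E = card (?D \<union> ?E)"
    by (rule card_Un_disjoint[symmetric]) (auto intro: finite_subset[OF _ fin])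
  also have "?D \<union> ?E = {(j, k). j \<in> A \<and> k \<in> A \<and> j < k}"
    by auto
  finally show ?thesis
    using card_less_pairs_same_value_ge[OF assms(1-3)] card_less_pairs[OF assms(1)]
    unfolding v_def w_def by linarith
qed

theorem theorem2:
  fixes n q :: nat and X :: "nat \<Rightarrow> nat \<Rightarrow> bool"
  assumes "1 \<le> q" and "q \<le> n"
    and "gf2_full_row_rank q n X"
    and "\<forall>j<n. col_nonzero q X j"
  shows "int (num_est_2fi q n X)
           \<le> int (n choose 2) - int ((n div (2^q - 1)) * (n mod (2^q - 1)))
              - int (2^q - 1) * int ((n div (2^q - 1)) choose 2)"
proof -
  define col where "col j = {i. i < q \<and> X i j}" for j
  have "col ` {..<n} \<subseteq> Pow {..<q} - {{}}"
    using assms(4) by (auto simp: col_def col_nonzero_def)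
  moreover have "card (Pow {..<q} - {{}}) = 2^q - 1"
    by (simp add: card_Diff_singleton card_Pow)
  moreover have "num_est_2fi q n X
      = card {(j, k). j \<in> {..<n} \<and> k \<in> {..<n} \<and> j < k \<and> col j \<noteq> col k}"
    unfolding num_est_2fi_def cols_differ_def col_def by (rule arg_cong[where f = card]) auto
  ultimately have "num_est_2fi q n X + (2^q - 1) * (n div (2^q - 1) choose 2)
      + n div (2^q - 1) * (n mod (2^q - 1)) \<le> n choose 2"
    using card_less_pairs_distinct_values_le[of "{..<n}" "Pow {..<q} - {{}}" col] by simp
  then show ?thesis
    unfolding of_nat_mult[symmetric] by linarith
qed

end
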